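(* Let $N\ge1$, let $L_1,\dots,L_N$, $K_1,\dots,K_N$ be positive integers with $K_n\le L_n$, let $P$ be a positive integer, and let $H$ be a TTM-tree (as defined in the context) with $|H|$ nodes. Let $\psi(P,N)$ be the number of ordered $N$-tuples of positive integers whose product is $P$. There is a dynamic-programming algorithm that computes a dynamic grid scheme for $H$ of minimum total communication volume (over all dynamic grid schemes using valid grids), using $O(|H|\cdot\psi(P,N))$ dynamic-programming table lookups.
   Context: A TTM-tree is a finite rooted tree whose root carries the label "input tensor", with exactly $N$ leaves labelled bijectively by $\{1,\dots,N\}$, whose internal nodes (neither root nor leaf) are labelled by modes in $\{1,\dots,N\}$, and such that for each leaf labelled $n$ the root-to-leaf path contains exactly $N-1$ internal nodes, carrying every mode other than $n$. Cardinalities: $c(\text{root})=\prod_j L_j$, and for an internal node $u$ with label $n$ and parent $v$, $|\mathrm{In}(u)|=c(v)$ and $|\mathrm{Out}(u)|=c(u)=(K_n/L_n)c(v)$. A grid is an $N$-tuple $g=(q_1,\dots,q_N)$ of positive integers with $\prod_j q_j=P$; it is valid if $q_n\le K_n$ for all $n$. A dynamic grid scheme $\pi$ assigns a valid grid $\pi(u)$ to every node $u$ of $H$. Its volume is the sum over all internal nodes $u$ (with label $n$ and parent $v$) of $(q_n-1)\,|\mathrm{Out}(u)|$, where $q_n$ is the $n$-th entry of $\pi(u)$, plus $|\mathrm{In}(u)|$ if $\pi(u)\neq\pi(v)$ (regridding cost) and $0$ otherwise. The grid at the root is free (no regridding cost at the root). *)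

theory Defs
  imports Complex_Main
begin

text \<open>The label of the
root is ignored (it stands for "input tensor"); leaves are the non-root nodes
without children; all other nodes are internal. Nodes are addressed by positions
(lists of child indices, the root being the empty list).\<close>

datatype tree = Node nat "tree list"

fun children :: "tree \<Rightarrow> tree list" where
  "children (Node n ts) = ts"

fun tlabel :: "tree \<Rightarrow> nat" where
  "tlabel (Node n ts) = n"

fun subtree_at :: "tree \<Rightarrow> nat list \<Rightarrow> tree option" where
  "subtree_at t [] = Some t"
| "subtree_at (Node n ts) (i # p) = (if i < length ts then subtree_at (ts ! i) p else None)"

definition positions :: "tree \<Rightarrow> nat list set" where
  "positions H = {p. subtree_at H p \<noteq> None}"

definition lab :: "tree \<Rightarrow> nat list \<Rightarrow> nat" where
  "lab H p = (case subtree_at H p of Some t \<Rightarrow> tlabel t | None \<Rightarrow> 0)"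

definition is_leaf :: "tree \<Rightarrow> nat list \<Rightarrow> bool" where
  "is_leaf H p \<longleftrightarrow> p \<in> positions H \<and> p \<noteq> [] \<and> children (the (subtree_at H p)) = []"

definition is_internal :: "tree \<Rightarrow> nat list \<Rightarrow> bool" where
  "is_internal H p \<longleftrightarrow> p \<in> positions H \<and> p \<noteq> [] \<and> children (the (subtree_at H p)) \<noteq> []"

definition num_nodes :: "tree \<Rightarrow> nat" where
  "num_nodes H = card (positions H)"

text \<open>TTM-tree with N modes: N leaves labelled bijectively by {1..N}; internal
nodes labelled by modes in {1..N}; the root-to-leaf path of the leaf labelled n
contains exactly N-1 internal nodes (the strict non-root prefixes of its
position), and they carry every mode other than n.\<close>
definition ttm_tree :: "nat \<Rightarrow> tree \<Rightarrow> bool" where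
  "ttm_tree N H \<longleftrightarrow>
     bij_betw (lab H) {p. is_leaf H p} {1..N} \<and>
     (\<forall>p. is_internal H p \<longrightarrow> lab H p \<in> {1..N}) \<and>
     (\<forall>p. is_leaf H p \<longrightarrow>
        card {q. (\<exists>k. 0 < k \<and> k < length p \<and> q = take k p) \<and> is_internal H q} = N - 1 \<and>
        lab H ` {q. (\<exists>k. 0 < k \<and> k < length p \<and> q = take k p) \<and> is_internal H q} = {1..N} - {lab H p})"

text \<open>c(root) = prod L_j; for an internal node u with label n and parent v,
c(u) = (K_n / L_n) c(v). (Leaves inherit the value of their parent; this value
is never used.)\<close>
fun cwalk :: "(nat \<Rightarrow> nat) \<Rightarrow> (nat \<Rightarrow> nat) \<Rightarrow> real \<Rightarrow> tree \<Rightarrow> nat list \<Rightarrow> real" where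
  "cwalk K L c t [] = c"
| "cwalk K L c (Node n ts) (i # p) =
     (if i < length ts then
        (let u = ts ! i in
         cwalk K L (if children u = [] then c else real (K (tlabel u)) / real (L (tlabel u)) * c) u p)
      else 0)"

definition card_node :: "nat \<Rightarrow> (nat \<Rightarrow> nat) \<Rightarrow> (nat \<Rightarrow> nat) \<Rightarrow> tree \<Rightarrow> nat list \<Rightarrow> real" where
  "card_node N L K H p = cwalk K L (\<Prod>j\<in>{1..N}. real (L j)) H p"

text \<open>A grid is an N-tuple (list of length N, entry n-1 is q_n) of positive
integers with product P.\<close>
definition grids :: "nat \<Rightarrow> nat \<Rightarrow> nat list set" where
  "grids N P = {g. length g = N \<and> (\<forall>x\<in>set g. 0 < x) \<and> prod_list g = P}"

definition psi :: "nat \<Rightarrow> nat \<Rightarrow> nat" where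
  "psi P N = card (grids N P)"

definition valid_grid :: "nat \<Rightarrow> (nat \<Rightarrow> nat) \<Rightarrow> nat \<Rightarrow> nat list \<Rightarrow> bool" where
  "valid_grid N K P g \<longleftrightarrow> g \<in> grids N P \<and> (\<forall>n\<in>{1..N}. g ! (n - 1) \<le> K n)"

definition dyn_scheme :: "nat \<Rightarrow> (nat \<Rightarrow> nat) \<Rightarrow> nat \<Rightarrow> tree \<Rightarrow> (nat list \<Rightarrow> nat list) \<Rightarrow> bool" where
  "dyn_scheme N K P H \<pi> \<longleftrightarrow> (\<forall>p\<in>positions H. valid_grid N K P (\<pi> p))"

definition volume :: "nat \<Rightarrow> (nat \<Rightarrow> nat) \<Rightarrow> (nat \<Rightarrow> nat) \<Rightarrow> tree \<Rightarrow> (nat list \<Rightarrow> nat list) \<Rightarrow> real" where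
  "volume N L K H \<pi> =
     (\<Sum>p\<in>{p. is_internal H p}.
        (real (\<pi> p ! (lab H p - 1)) - 1) * card_node N L K H p
        + (if \<pi> p \<noteq> \<pi> (butlast p) then card_node N L K H (butlast p) else 0))"

fun tuples :: "nat \<Rightarrow> nat \<Rightarrow> nat list list" where
  "tuples 0 P = (if P = 1 then [[]] else [])"
| "tuples (Suc n) P =
     concat (map (\<lambda>d. map (Cons d) (tuples n (P div d))) (filter (\<lambda>d. d dvd P) [1..<Suc P]))"

definition valid_list :: "nat \<Rightarrow> (nat \<Rightarrow> nat) \<Rightarrow> nat \<Rightarrow> nat list list" where
  "valid_list N K P = filter (\<lambda>g. \<forall>n\<in>{1..N}. g ! (n - 1) \<le> K n) (tuples N P)"

fun argmin_list :: "('a \<Rightarrow> real) \<Rightarrow> 'a list \<Rightarrow> 'a" where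
  "argmin_list f [] = undefined"
| "argmin_list f [x] = x"
| "argmin_list f (x # y # xs) = (let z = argmin_list f (y # xs) in if f x \<le> f z then x else z)"

text \<open>DP table for a node: its cardinality c, the table g \<mapsto> optimal cost of the
subtree given grid g at the node, the best value, an optimal grid, and the tables
of the children.\<close>
datatype dtree = DN real "nat list \<Rightarrow> real" real "nat list" "dtree list"

fun dt_tab :: "dtree \<Rightarrow> nat list \<Rightarrow> real" where "dt_tab (DN c t b a ds) = t"
fun dt_best :: "dtree \<Rightarrow> real" where "dt_best (DN c t b a ds) = b"
fun dt_arg :: "dtree \<Rightarrow> nat list" where "dt_arg (DN c t b a ds) = a"

text \<open>Each table entry of a node reads, for
each child, one entry of the child table and the child's best value (2 lookups per
child); computing the best value reads every entry of the node's table. The second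
component is the number of table lookups performed.\<close>
fun dp :: "nat list list \<Rightarrow> (nat \<Rightarrow> nat) \<Rightarrow> (nat \<Rightarrow> nat) \<Rightarrow> bool \<Rightarrow> real \<Rightarrow> tree \<Rightarrow> dtree \<times> nat" where
  "dp vg K L isroot cin (Node n ts) =
    (let c = (if isroot \<or> ts = [] then cin else real (K n) / real (L n) * cin);
         rs = map (dp vg K L False c) ts;
         chs = map fst rs;
         tab = (\<lambda>g. (if isroot \<or> ts = [] then 0 else (real (g ! (n - 1)) - 1) * c)
                    + sum_list (map (\<lambda>d. min (dt_tab d g) (dt_best d + c)) chs));
         am = argmin_list tab vg
     in (DN c tab (tab am) am chs,
         sum_list (map snd rs) + 2 * length ts * length vg + length vg))"

text \<open>Top-down reconstruction of the scheme: given the grid chosen at a node,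
each child keeps it if that is optimal (2 lookups), otherwise takes its optimal grid.\<close>
fun recon :: "nat list \<Rightarrow> dtree \<Rightarrow> (nat list \<Rightarrow> nat list) \<times> nat" where
  "recon g (DN c t b a ds) =
    (let rs = map (\<lambda>d. recon (if dt_tab d g \<le> dt_best d + c then g else dt_arg d) d) ds
     in ((\<lambda>p. case p of [] \<Rightarrow> g | i # q \<Rightarrow> if i < length ds then fst (rs ! i) q else g),
         sum_list (map snd rs) + 2 * length ds))"

definition dp_algorithm :: "nat \<Rightarrow> (nat \<Rightarrow> nat) \<Rightarrow> (nat \<Rightarrow> nat) \<Rightarrow> nat \<Rightarrow> tree \<Rightarrow> (nat list \<Rightarrow> nat list) \<times> nat" where
  "dp_algorithm N L K P H =
    (let vg = valid_list N K P;
         (D, c1) = dp vg K L True (\<Prod>j\<in>{1..N}. real (L j)) H;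
         (\<pi>, c2) = recon (dt_arg D) D
     in (\<pi>, c1 + c2))"

end

theory Submission imports Defs begin

text \<open>The volume of a scheme splits over the tree: every non-root internal node u pays
(q_n - 1) c(u) for its own grid plus c(parent) if its grid differs from the parent's. So
the least cost T_u(g) of the subtree of u, given grid g at u, obeys
T_u(g) = own_u(g) + \<Sum>_v min (T_v(g), min T_v + c(u)) over the children v,
which is exactly the table computed by dp. Every scheme costs at least the root table at
its root grid, and the reconstruction, which takes the minimising branch at each child,
attains the table value; hence it is optimal. A table has one entry per valid grid, at
most psi(P,N) of them, and dp reads 3 entries per grid and node while the reconstruction
reads 2 per node, giving at most 5 |H| psi(P,N) lookups.\<close>

section \<open>Enumerating grids\<close>

lemma set_tuples: "set (tuples n P) = grids n P"
proof (induction n arbitrary: P)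
  case 0
  show ?case by (auto simp: grids_def)
next
  case (Suc n)
  show ?case
  proof (intro set_eqI iffI)
    fix g assume "g \<in> set (tuples (Suc n) P)"
    then show "g \<in> grids (Suc n) P" using Suc by (auto simp: grids_def)
  next
    fix g assume g: "g \<in> grids (Suc n) P"
    then obtain d g' where g_eq: "g = d # g'" by (cases g) (auto simp: grids_def)
    with g have d: "0 < d" "d * prod_list g' = P" and g': "g' \<in> grids n (P div d)"
      by (auto simp: grids_def)
    have "0 \<notin> set g'" using g' by (auto simp: grids_def)
    then have "0 < prod_list g'" by (metis gr0I prod_list_zero_iff)
    then have "d \<in> set (filter (\<lambda>d. d dvd P) [1..<Suc P])"
      using d by (auto simp: Suc_le_eq)
    then show "g \<in> set (tuples (Suc n) P)"
      using Suc g' by (auto simp: g_eq)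
  qed
qed

lemma distinct_concat_map:
  assumes "distinct xs" "\<And>x. distinct (f x)" "\<And>x y. x \<noteq> y \<Longrightarrow> set (f x) \<inter> set (f y) = {}"
  shows "distinct (concat (map f xs))"
  using assms(1)
proof (induction xs)
  case (Cons a xs)
  have "set (f a) \<inter> set (f x) = {}" if "x \<in> set xs" for x
    using Cons.prems assms(3)[of a x] that by auto
  then have "set (f a) \<inter> set (concat (map f xs)) = {}" by auto
  with Cons show ?case by (simp add: assms(2))
qed simp

lemma distinct_tuples: "distinct (tuples n P)"
proof (induction n arbitrary: P)
  case (Suc n)
  show ?case unfolding tuples.simps
    by (rule distinct_concat_map) (auto simp: Suc distinct_map)
qed simp

lemma psi_eq_length_tuples: "psi P N = length (tuples N P)"
  unfolding psi_def set_tuples[symmetric] using distinct_tuples by (rule distinct_card)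

lemma psi_pos: "1 \<le> N \<Longrightarrow> 0 < P \<Longrightarrow> 0 < psi P N"
  unfolding psi_eq_length_tuples
  using set_tuples[of N P, unfolded grids_def] by (fastforce dest!: spec[of _ "P # replicate (N - 1) 1"])

lemma set_valid_list: "set (valid_list N K P) = {g. valid_grid N K P g}"
  by (auto simp: valid_list_def valid_grid_def set_tuples)

lemma length_valid_list_le_psi: "length (valid_list N K P) \<le> psi P N"
  by (simp add: valid_list_def psi_eq_length_tuples)

lemma positions_Node:
  "positions (Node m us) = insert [] (\<Union>i<length us. Cons i ` positions (us ! i))"
  unfolding positions_def
proof (intro set_eqI iffI)
  fix p assume "p \<in> {p. subtree_at (Node m us) p \<noteq> None}"
  then show "p \<in> insert [] (\<Union>i<length us. Cons i ` {p. subtree_at (us ! i) p \<noteq> None})"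
    by (cases p) (auto split: if_splits)
qed auto

lemma Nil_in_positions: "[] \<in> positions t"
  by (cases t) (simp add: positions_Node)

lemma Cons_in_positions_Node: "i < length us \<Longrightarrow> q \<in> positions (us ! i) \<Longrightarrow> i # q \<in> positions (Node m us)"
  by (auto simp: positions_Node)

lemma finite_positions: "finite (positions t)"
  by (induction t) (auto simp: positions_Node)

lemma num_nodes_Node: "num_nodes (Node m us) = Suc (\<Sum>u\<leftarrow>us. num_nodes u)"
proof -
  have "card (\<Union>i<length us. Cons i ` positions (us ! i)) = (\<Sum>i<length us. card (Cons i ` positions (us ! i)))"
    by (rule card_UN_disjoint) (auto simp: finite_positions)
  also have "\<dots> = (\<Sum>u\<leftarrow>us. num_nodes u)"
    by (simp add: card_image num_nodes_def sum_list_sum_nth atLeast0LessThan)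
  finally show ?thesis
    unfolding num_nodes_def positions_Node by (subst card_insert_disjoint) (auto simp: finite_positions)
qed

lemma not_is_internal_Nil [simp]: "\<not> is_internal t []"
  by (simp add: is_internal_def)

lemma is_internal_Cons:
  "is_internal (Node m us) (i # q) \<longleftrightarrow> i < length us \<and> (q = [] \<and> children (us ! i) \<noteq> [] \<or> is_internal (us ! i) q)"
  by (cases q) (auto simp: is_internal_def positions_def)

lemma internal_Node:
  "{p. is_internal (Node m us) p} =
     (\<Union>i<length us. Cons i ` ({q. q = [] \<and> children (us ! i) \<noteq> []} \<union> {q. is_internal (us ! i) q}))"
proof (intro set_eqI iffI)
  fix p assume "p \<in> {p. is_internal (Node m us) p}"
  then show "p \<in> (\<Union>i<length us. Cons i ` ({q. q = [] \<and> children (us ! i) \<noteq> []} \<union> {q. is_internal (us ! i) q}))"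
    by (cases p) (auto simp: is_internal_Cons)
qed (auto simp: is_internal_Cons)

lemma finite_internal: "finite {p. is_internal t p}"
  by (rule finite_subset[OF _ finite_positions]) (auto simp: is_internal_def)

section \<open>Decomposing the volume over subtrees\<close>

text \<open>For a subtree t whose parent has cardinality c (or, if r holds, for the whole tree,
whose root has cardinality c), step_card is the cardinality of t, own_cost the cost
(q_n - 1) c(t) of t under grid g, and scheme_cost the volume of the subtree of t without the
regridding cost at t.\<close>

definition step_card :: "(nat \<Rightarrow> nat) \<Rightarrow> (nat \<Rightarrow> nat) \<Rightarrow> bool \<Rightarrow> real \<Rightarrow> tree \<Rightarrow> real" where
  "step_card K L r c t = (if r \<or> children t = [] then c else real (K (tlabel t)) / real (L (tlabel t)) * c)"

lemma step_card_nonneg: "0 \<le> c \<Longrightarrow> 0 \<le> step_card K L r c t"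
  by (simp add: step_card_def)

definition own_cost :: "(nat \<Rightarrow> nat) \<Rightarrow> (nat \<Rightarrow> nat) \<Rightarrow> bool \<Rightarrow> real \<Rightarrow> tree \<Rightarrow> nat list \<Rightarrow> real" where
  "own_cost K L r c t g =
     (if r \<or> children t = [] then 0 else (real (g ! (tlabel t - 1)) - 1) * step_card K L r c t)"

definition node_volume ::
  "(nat \<Rightarrow> nat) \<Rightarrow> (nat \<Rightarrow> nat) \<Rightarrow> real \<Rightarrow> tree \<Rightarrow> (nat list \<Rightarrow> nat list) \<Rightarrow> nat list \<Rightarrow> real" where
  "node_volume K L c t \<sigma> p = (real (\<sigma> p ! (lab t p - 1)) - 1) * cwalk K L c t p
     + (if \<sigma> p \<noteq> \<sigma> (butlast p) then cwalk K L c t (butlast p) else 0)"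

definition tree_volume :: "(nat \<Rightarrow> nat) \<Rightarrow> (nat \<Rightarrow> nat) \<Rightarrow> real \<Rightarrow> tree \<Rightarrow> (nat list \<Rightarrow> nat list) \<Rightarrow> real" where
  "tree_volume K L c t \<sigma> = (\<Sum>p | is_internal t p. node_volume K L c t \<sigma> p)"

definition scheme_cost ::
  "(nat \<Rightarrow> nat) \<Rightarrow> (nat \<Rightarrow> nat) \<Rightarrow> bool \<Rightarrow> real \<Rightarrow> tree \<Rightarrow> (nat list \<Rightarrow> nat list) \<Rightarrow> real" where
  "scheme_cost K L r c t \<sigma> = own_cost K L r c t (\<sigma> []) + tree_volume K L (step_card K L r c t) t \<sigma>"

lemma volume_eq_tree_volume: "volume N L K H \<pi> = tree_volume K L (\<Prod>j\<in>{1..N}. real (L j)) H \<pi>"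
  unfolding volume_def tree_volume_def node_volume_def card_node_def by simp

lemma scheme_cost_root: "scheme_cost K L True c t \<sigma> = tree_volume K L c t \<sigma>"
  by (simp add: scheme_cost_def own_cost_def step_card_def)

lemma cwalk_Cons:
  "i < length us \<Longrightarrow> cwalk K L c (Node m us) (i # q) = cwalk K L (step_card K L False c (us ! i)) (us ! i) q"
  by (simp add: step_card_def Let_def)

lemma lab_Cons: "i < length us \<Longrightarrow> lab (Node m us) (i # q) = lab (us ! i) q"
  by (simp add: lab_def)

lemma node_volume_Cons:
  assumes "i < length us" "q \<noteq> []"
  shows "node_volume K L c (Node m us) \<sigma> (i # q) =
           node_volume K L (step_card K L False c (us ! i)) (us ! i) (\<lambda>q. \<sigma> (i # q)) q"
proof -
  have "butlast (i # q) = i # butlast q" using assms(2) by simp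
  then show ?thesis unfolding node_volume_def using assms(1) by (simp only: lab_Cons cwalk_Cons)
qed

lemma node_volume_child:
  assumes "i < length us" "children (us ! i) \<noteq> []"
  shows "node_volume K L c (Node m us) \<sigma> [i] =
           own_cost K L False c (us ! i) (\<sigma> [i]) + (if \<sigma> [i] \<noteq> \<sigma> [] then c else 0)"
  using assms by (simp add: node_volume_def own_cost_def lab_def step_card_def Let_def)

lemma tree_volume_Node:
  "tree_volume K L c (Node m us) \<sigma> =
     (\<Sum>i<length us. (if children (us ! i) \<noteq> [] \<and> \<sigma> [i] \<noteq> \<sigma> [] then c else 0)
                     + scheme_cost K L False c (us ! i) (\<lambda>q. \<sigma> (i # q)))"
  (is "_ = ?rhs")
proof -
  let ?R = "\<lambda>i. {q. q = [] \<and> children (us ! i) \<noteq> []}" and ?I = "\<lambda>i. {q. is_internal (us ! i) q}"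
  have "tree_volume K L c (Node m us) \<sigma> =
          (\<Sum>i<length us. \<Sum>p\<in>Cons i ` (?R i \<union> ?I i). node_volume K L c (Node m us) \<sigma> p)"
    unfolding tree_volume_def internal_Node by (rule sum.UNION_disjoint) (auto simp: finite_internal)
  also have "\<dots> = (\<Sum>i<length us. (\<Sum>q\<in>?R i. node_volume K L c (Node m us) \<sigma> (i # q))
                                  + (\<Sum>q\<in>?I i. node_volume K L c (Node m us) \<sigma> (i # q)))"
    by (intro sum.cong refl, subst sum.reindex) (auto intro: sum.union_disjoint simp: finite_internal)
  also have "\<dots> = ?rhs"
  proof (rule sum.cong)
    fix i assume i: "i \<in> {..<length us}"
    have "(\<Sum>q\<in>?R i. node_volume K L c (Node m us) \<sigma> (i # q))
            = own_cost K L False c (us ! i) (\<sigma> [i])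
              + (if children (us ! i) \<noteq> [] \<and> \<sigma> [i] \<noteq> \<sigma> [] then c else 0)"
      using node_volume_child[of i us] i by (cases "children (us ! i) = []") (auto simp: own_cost_def)
    moreover have "(\<Sum>q\<in>?I i. node_volume K L c (Node m us) \<sigma> (i # q))
            = tree_volume K L (step_card K L False c (us ! i)) (us ! i) (\<lambda>q. \<sigma> (i # q))"
      unfolding tree_volume_def by (rule sum.cong) (use i in \<open>auto intro!: node_volume_Cons\<close>)
    ultimately show "(\<Sum>q\<in>?R i. node_volume K L c (Node m us) \<sigma> (i # q))
                      + (\<Sum>q\<in>?I i. node_volume K L c (Node m us) \<sigma> (i # q))
                     = (if children (us ! i) \<noteq> [] \<and> \<sigma> [i] \<noteq> \<sigma> [] then c else 0)
                       + scheme_cost K L False c (us ! i) (\<lambda>q. \<sigma> (i # q))"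
      by (simp add: scheme_cost_def)
  qed simp
  finally show ?thesis .
qed

section \<open>The dynamic-programming tables\<close>

lemma argmin_list_in: "xs \<noteq> [] \<Longrightarrow> argmin_list f xs \<in> set xs"
  by (induction f xs rule: argmin_list.induct) (auto simp: Let_def)

lemma argmin_list_le: "x \<in> set xs \<Longrightarrow> f (argmin_list f xs) \<le> f x"
  by (induction f xs rule: argmin_list.induct) (auto simp: Let_def)

lemma dp_Node:
  "fst (dp vg K L r cin (Node n ts)) =
     (let c = step_card K L r cin (Node n ts);
          ds = map (\<lambda>u. fst (dp vg K L False c u)) ts;
          tab = (\<lambda>g. own_cost K L r cin (Node n ts) g
                      + (\<Sum>i<length ts. min (dt_tab (ds ! i) g) (dt_best (ds ! i) + c)))
      in DN c tab (tab (argmin_list tab vg)) (argmin_list tab vg) ds)"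
  by (simp add: Let_def step_card_def own_cost_def comp_def sum_list_sum_nth atLeast0LessThan)

lemma snd_dp_Node:
  "snd (dp vg K L r cin (Node n ts)) =
     (\<Sum>u\<leftarrow>ts. snd (dp vg K L False (step_card K L r cin (Node n ts)) u)) + 2 * length ts * length vg + length vg"
  by (simp add: Let_def step_card_def comp_def)

declare dp.simps [simp del]

lemma dt_tab_dp_Node:
  fixes K L :: "nat \<Rightarrow> nat" and r :: bool and cin :: real and n :: nat and ts :: "tree list"
  defines "c \<equiv> step_card K L r cin (Node n ts)"
  shows "dt_tab (fst (dp vg K L r cin (Node n ts))) g = own_cost K L r cin (Node n ts) g
           + (\<Sum>i<length ts. min (dt_tab (fst (dp vg K L False c (ts ! i))) g)
                                 (dt_best (fst (dp vg K L False c (ts ! i))) + c))"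
  unfolding dp_Node c_def by (simp add: Let_def)

lemma dt_arg_dp: "dt_arg (fst (dp vg K L r cin t)) = argmin_list (dt_tab (fst (dp vg K L r cin t))) vg"
  by (cases t) (simp add: dp_Node Let_def)

lemma dt_best_dp: "dt_best (fst (dp vg K L r cin t)) = dt_tab (fst (dp vg K L r cin t)) (dt_arg (fst (dp vg K L r cin t)))"
  by (cases t) (simp add: dp_Node Let_def)

lemma dt_tab_dp_leaf: "children t = [] \<Longrightarrow> dt_tab (fst (dp vg K L r cin t)) g = 0"
  by (cases t) (simp add: dt_tab_dp_Node own_cost_def)

lemma dt_arg_dp_in: "vg \<noteq> [] \<Longrightarrow> dt_arg (fst (dp vg K L r cin t)) \<in> set vg"
  unfolding dt_arg_dp by (rule argmin_list_in)

lemma dt_best_dp_le: "g \<in> set vg \<Longrightarrow> dt_best (fst (dp vg K L r cin t)) \<le> dt_tab (fst (dp vg K L r cin t)) g"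
  unfolding dt_best_dp dt_arg_dp by (rule argmin_list_le)

definition child_grid :: "dtree \<Rightarrow> real \<Rightarrow> nat list \<Rightarrow> nat list" where
  "child_grid d c g = (if dt_tab d g \<le> dt_best d + c then g else dt_arg d)"

lemma recon_Nil: "fst (recon g D) [] = g"
  by (cases D) (simp add: Let_def)

lemma recon_dp_Cons:
  fixes K L :: "nat \<Rightarrow> nat" and r :: bool and cin :: real and n :: nat and ts :: "tree list"
  defines "c \<equiv> step_card K L r cin (Node n ts)"
  assumes "i < length ts"
  shows "fst (recon g (fst (dp vg K L r cin (Node n ts)))) (i # q) =
           fst (recon (child_grid (fst (dp vg K L False c (ts ! i))) c g) (fst (dp vg K L False c (ts ! i)))) q"
  using assms(2) unfolding dp_Node c_def by (simp add: Let_def child_grid_def)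

lemma snd_recon_dp_Node:
  fixes K L :: "nat \<Rightarrow> nat" and r :: bool and cin :: real and n :: nat and ts :: "tree list"
  defines "c \<equiv> step_card K L r cin (Node n ts)"
  shows "snd (recon g (fst (dp vg K L r cin (Node n ts)))) =
           (\<Sum>u\<leftarrow>ts. snd (recon (child_grid (fst (dp vg K L False c u)) c g) (fst (dp vg K L False c u))))
           + 2 * length ts"
  unfolding dp_Node c_def by (simp add: Let_def child_grid_def comp_def)

lemma dp_lookups: "snd (dp vg K L r cin t) + 2 * length vg = 3 * length vg * num_nodes t"
proof (induction t arbitrary: r cin)
  case (Node n ts)
  define c where "c = step_card K L r cin (Node n ts)"
  have "(\<Sum>u\<leftarrow>ts. snd (dp vg K L False c u) + 2 * length vg) = (\<Sum>u\<leftarrow>ts. 3 * length vg * num_nodes u)"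
    by (rule arg_cong[where f = sum_list], rule map_cong, rule refl, erule Node.IH)
  then have "(\<Sum>u\<leftarrow>ts. snd (dp vg K L False c u)) + length ts * (2 * length vg)
               = 3 * length vg * (\<Sum>u\<leftarrow>ts. num_nodes u)"
    by (simp only: sum_list_addf sum_list_triv sum_list_const_mult of_nat_id)
  then show ?case by (simp add: snd_dp_Node num_nodes_Node c_def)
qed

lemma recon_lookups: "snd (recon g (fst (dp vg K L r cin t))) + 2 = 2 * num_nodes t"
proof (induction t arbitrary: r cin g)
  case (Node n ts)
  define c where "c = step_card K L r cin (Node n ts)"
  let ?cnt = "\<lambda>u. snd (recon (child_grid (fst (dp vg K L False c u)) c g) (fst (dp vg K L False c u)))"
  have "(\<Sum>u\<leftarrow>ts. ?cnt u + 2) = (\<Sum>u\<leftarrow>ts. 2 * num_nodes u)"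
    by (rule arg_cong[where f = sum_list], rule map_cong, rule refl, erule Node.IH)
  then have "(\<Sum>u\<leftarrow>ts. ?cnt u) + length ts * 2 = 2 * (\<Sum>u\<leftarrow>ts. num_nodes u)"
    by (simp only: sum_list_addf sum_list_triv sum_list_const_mult of_nat_id)
  then show ?case by (simp add: snd_recon_dp_Node num_nodes_Node c_def)
qed

lemma dp_table_le_scheme_cost:
  assumes "0 \<le> cin" "\<forall>p\<in>positions t. \<sigma> p \<in> set vg"
  shows "dt_tab (fst (dp vg K L r cin t)) (\<sigma> []) \<le> scheme_cost K L r cin t \<sigma>"
  using assms
proof (induction t arbitrary: r cin \<sigma>)
  case (Node n ts)
  define c where "c = step_card K L r cin (Node n ts)"
  define d where "d i = fst (dp vg K L False c (ts ! i))" for i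
  have c: "0 \<le> c" using Node.prems(1) by (simp add: c_def step_card_nonneg)
  have "min (dt_tab (d i) (\<sigma> [])) (dt_best (d i) + c)
          \<le> (if children (ts ! i) \<noteq> [] \<and> \<sigma> [i] \<noteq> \<sigma> [] then c else 0)
             + scheme_cost K L False c (ts ! i) (\<lambda>q. \<sigma> (i # q))" if i: "i < length ts" for i
  proof -
    have pos: "\<forall>p\<in>positions (ts ! i). \<sigma> (i # p) \<in> set vg"
      using Node.prems(2) Cons_in_positions_Node[OF i] by blast
    have IH: "dt_tab (d i) (\<sigma> [i]) \<le> scheme_cost K L False c (ts ! i) (\<lambda>q. \<sigma> (i # q))"
      using Node.IH[OF nth_mem[OF i] c pos] by (simp add: d_def)
    show ?thesis
    proof (cases "children (ts ! i) \<noteq> [] \<and> \<sigma> [i] \<noteq> \<sigma> []")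
      case True
      have "dt_best (d i) \<le> dt_tab (d i) (\<sigma> [i])"
        unfolding d_def by (rule dt_best_dp_le) (use pos Nil_in_positions in blast)
      with True IH show ?thesis by simp
    next
      case False
      then have "dt_tab (d i) (\<sigma> []) = dt_tab (d i) (\<sigma> [i])"
        by (auto simp: d_def dt_tab_dp_leaf)
      moreover have "min (dt_tab (d i) (\<sigma> [])) (dt_best (d i) + c) \<le> dt_tab (d i) (\<sigma> [])"
        by (rule min.cobounded1)
      ultimately show ?thesis using False IH by auto
    qed
  qed
  then have "(\<Sum>i<length ts. min (dt_tab (d i) (\<sigma> [])) (dt_best (d i) + c))
               \<le> tree_volume K L c (Node n ts) \<sigma>"
    unfolding tree_volume_Node by (intro sum_mono) simp
  then show ?case
    by (simp add: dt_tab_dp_Node scheme_cost_def c_def d_def)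
qed

lemma recon_dp_in:
  assumes "vg \<noteq> []" "p \<in> positions t"
  shows "fst (recon g (fst (dp vg K L r cin t))) p \<in> insert g (set vg)"
  using assms(2)
proof (induction t arbitrary: r cin g p)
  case (Node n ts)
  show ?case
  proof (cases p)
    case (Cons i q)
    define c where "c = step_card K L r cin (Node n ts)"
    define d where "d = fst (dp vg K L False c (ts ! i))"
    have i: "i < length ts" and q: "q \<in> positions (ts ! i)"
      using Node.prems by (auto simp: Cons positions_Node)
    have "child_grid d c g \<in> insert g (set vg)"
      using dt_arg_dp_in[OF assms(1)] by (simp add: child_grid_def d_def)
    then show ?thesis
      using Node.IH[OF nth_mem[OF i] q, where r = False and cin = c and g = "child_grid d c g"]
      by (auto simp: Cons recon_dp_Cons[OF i] c_def d_def)
  qed (simp add: recon_Nil)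
qed

lemma dp_table_eq_scheme_cost_recon:
  assumes "0 \<le> cin"
  shows "dt_tab (fst (dp vg K L r cin t)) g = scheme_cost K L r cin t (fst (recon g (fst (dp vg K L r cin t))))"
  using assms
proof (induction t arbitrary: r cin g)
  case (Node n ts)
  define c where "c = step_card K L r cin (Node n ts)"
  define d where "d i = fst (dp vg K L False c (ts ! i))" for i
  define \<pi> where "\<pi> = fst (recon g (fst (dp vg K L r cin (Node n ts))))"
  have c: "0 \<le> c" using Node.prems(1) by (simp add: c_def step_card_nonneg)
  have "min (dt_tab (d i) g) (dt_best (d i) + c)
          = (if children (ts ! i) \<noteq> [] \<and> \<pi> [i] \<noteq> \<pi> [] then c else 0)
             + scheme_cost K L False c (ts ! i) (\<lambda>q. \<pi> (i # q))" if i: "i < length ts" for i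
  proof -
    have \<pi>_i: "(\<lambda>q. \<pi> (i # q)) = fst (recon (child_grid (d i) c g) (d i))"
      by (simp add: \<pi>_def recon_dp_Cons[OF i] c_def d_def)
    have IH: "dt_tab (d i) (child_grid (d i) c g) = scheme_cost K L False c (ts ! i) (\<lambda>q. \<pi> (i # q))"
      unfolding \<pi>_i d_def by (rule Node.IH[OF nth_mem[OF i] c])
    have \<pi>_Nil: "\<pi> [] = g" and \<pi>_child: "\<pi> [i] = child_grid (d i) c g"
      using fun_cong[OF \<pi>_i, of "[]"] by (simp_all add: \<pi>_def recon_Nil)
    show ?thesis
    proof (cases "dt_tab (d i) g \<le> dt_best (d i) + c")
      case True
      with IH show ?thesis by (simp add: \<pi>_Nil \<pi>_child child_grid_def)
    next
      case False
      have best: "dt_best (d i) = dt_tab (d i) (dt_arg (d i))"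
        unfolding d_def by (rule dt_best_dp)
      with False c have "dt_arg (d i) \<noteq> g" by auto
      moreover have "children (ts ! i) \<noteq> []"
        using False c dt_tab_dp_leaf[of "ts ! i"] best by (force simp: d_def)
      ultimately show ?thesis
        using False IH best by (simp add: \<pi>_Nil \<pi>_child child_grid_def)
    qed
  qed
  then have "(\<Sum>i<length ts. min (dt_tab (d i) g) (dt_best (d i) + c)) = tree_volume K L c (Node n ts) \<pi>"
    unfolding tree_volume_Node by (intro sum.cong) simp_all
  then show ?case
    by (simp add: dt_tab_dp_Node scheme_cost_def c_def d_def \<pi>_def recon_Nil)
qed

lemma dyn_scheme_iff_valid_list:
  "dyn_scheme N K P H \<sigma> \<longleftrightarrow> (\<forall>p\<in>positions H. \<sigma> p \<in> set (valid_list N K P))"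
  by (simp add: dyn_scheme_def set_valid_list)

lemma dp_algorithm_eq:
  "dp_algorithm N L K P H =
     (let R = dp (valid_list N K P) K L True (\<Prod>j\<in>{1..N}. real (L j)) H; D = fst R
      in (fst (recon (dt_arg D) D), snd R + snd (recon (dt_arg D) D)))"
  unfolding dp_algorithm_def by (simp add: Let_def split: prod.split)

lemma dp_algorithm_optimal:
  assumes "dyn_scheme N K P H \<sigma>"
  shows "dyn_scheme N K P H (fst (dp_algorithm N L K P H))"
    and "volume N L K H (fst (dp_algorithm N L K P H)) \<le> volume N L K H \<sigma>"
proof -
  define vg where "vg = valid_list N K P"
  define c where "c = (\<Prod>j\<in>{1..N}. real (L j))"
  define D where "D = fst (dp vg K L True c H)"
  have \<pi>: "fst (dp_algorithm N L K P H) = fst (recon (dt_arg D) D)"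
    by (simp add: dp_algorithm_eq Let_def D_def vg_def c_def)
  have c: "0 \<le> c" by (simp add: c_def prod_nonneg)
  have \<sigma>: "\<forall>p\<in>positions H. \<sigma> p \<in> set vg"
    using assms by (simp add: dyn_scheme_iff_valid_list vg_def)
  then have vg: "vg \<noteq> []" using Nil_in_positions by fastforce
  have "fst (recon (dt_arg D) D) p \<in> set vg" if "p \<in> positions H" for p
    using recon_dp_in[OF vg that, where K = K and L = L and r = True and cin = c and g = "dt_arg D"]
      dt_arg_dp_in[OF vg]
    by (auto simp: D_def)
  then show "dyn_scheme N K P H (fst (dp_algorithm N L K P H))"
    by (simp add: dyn_scheme_iff_valid_list \<pi> vg_def)
  have "volume N L K H (fst (dp_algorithm N L K P H)) = dt_tab D (dt_arg D)"
    using dp_table_eq_scheme_cost_recon[OF c, of vg K L True H "dt_arg D"]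
    by (simp add: \<pi> volume_eq_tree_volume scheme_cost_root D_def c_def)
  also have "\<dots> = dt_best D"
    unfolding D_def by (rule dt_best_dp[symmetric])
  also have "\<dots> \<le> dt_tab D (\<sigma> [])"
    unfolding D_def by (rule dt_best_dp_le) (use \<sigma> Nil_in_positions in blast)
  also have "\<dots> \<le> volume N L K H \<sigma>"
    using dp_table_le_scheme_cost[OF c \<sigma>, of K L True]
    by (simp add: D_def volume_eq_tree_volume c_def scheme_cost_root)
  finally show "volume N L K H (fst (dp_algorithm N L K P H)) \<le> volume N L K H \<sigma>" .
qed

lemma dp_algorithm_lookups:
  assumes "1 \<le> N" "0 < P"
  shows "snd (dp_algorithm N L K P H) \<le> 5 * num_nodes H * psi P N"
proof -
  define vg where "vg = valid_list N K P"
  define R where "R = dp vg K L True (\<Prod>j\<in>{1..N}. real (L j)) H"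
  have "snd R + 2 * length vg = 3 * length vg * num_nodes H"
    unfolding R_def by (rule dp_lookups)
  moreover have "3 * length vg * num_nodes H \<le> 3 * (num_nodes H * psi P N)"
    using length_valid_list_le_psi[of N K P] by (simp add: vg_def)
  moreover have "snd (recon (dt_arg (fst R)) (fst R)) + 2 = 2 * num_nodes H"
    unfolding R_def by (rule recon_lookups)
  moreover have "2 * num_nodes H \<le> 2 * (num_nodes H * psi P N)"
    using psi_pos[OF assms] by simp
  ultimately have "snd R + snd (recon (dt_arg (fst R)) (fst R)) \<le> 5 * (num_nodes H * psi P N)"
    by linarith
  then show ?thesis
    by (simp add: dp_algorithm_eq Let_def R_def vg_def mult.assoc)
qed

theorem mainTheorem3:
  "\<exists>C::real. \<forall>N (L::nat \<Rightarrow> nat) (K::nat \<Rightarrow> nat) (P::nat) H.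
     N \<ge> 1 \<and> (\<forall>n\<in>{1..N}. 0 < K n \<and> K n \<le> L n) \<and> 0 < P \<and> ttm_tree N H \<longrightarrow>
     (let (\<pi>, cnt) = dp_algorithm N L K P H in
        ((\<exists>\<sigma>. dyn_scheme N K P H \<sigma>) \<longrightarrow>
            dyn_scheme N K P H \<pi> \<and>
            (\<forall>\<sigma>. dyn_scheme N K P H \<sigma> \<longrightarrow> volume N L K H \<pi> \<le> volume N L K H \<sigma>)) \<and>
        real cnt \<le> C * real (num_nodes H) * real (psi P N))"
proof (intro exI[of _ 5] allI impI)
  fix N P :: nat and L K :: "nat \<Rightarrow> nat" and H :: tree
  assume "N \<ge> 1 \<and> (\<forall>n\<in>{1..N}. 0 < K n \<and> K n \<le> L n) \<and> 0 < P \<and> ttm_tree N H"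
  then have lookups: "snd (dp_algorithm N L K P H) \<le> 5 * num_nodes H * psi P N"
    by (intro dp_algorithm_lookups) auto
  obtain \<pi> cnt where alg: "dp_algorithm N L K P H = (\<pi>, cnt)" by fastforce
  have "real cnt \<le> 5 * real (num_nodes H) * real (psi P N)"
    using lookups unfolding alg of_nat_le_iff[symmetric, where 'a = real] by simp
  moreover have "dyn_scheme N K P H \<pi>" if "dyn_scheme N K P H \<sigma>" for \<sigma>
    using dp_algorithm_optimal(1)[OF that, where L = L] by (simp add: alg)
  moreover have "volume N L K H \<pi> \<le> volume N L K H \<sigma>" if "dyn_scheme N K P H \<sigma>" for \<sigma>
    using dp_algorithm_optimal(2)[OF that, where L = L] by (simp add: alg)
  ultimately show "let (\<pi>, cnt) = dp_algorithm N L K P H in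
        ((\<exists>\<sigma>. dyn_scheme N K P H \<sigma>) \<longrightarrow>
            dyn_scheme N K P H \<pi> \<and>
            (\<forall>\<sigma>. dyn_scheme N K P H \<sigma> \<longrightarrow> volume N L K H \<pi> \<le> volume N L K H \<sigma>)) \<and>
        real cnt \<le> 5 * real (num_nodes H) * real (psi P N)"
    unfolding alg by auto
qed

end
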